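(* Let $E$ be a nonempty bounded subset of $M_a$ and $p\in E$. If $i\in\Lambda(E)$, then $p+\alpha e_i\in\mathrm{GS}(E,p)$ for all $\alpha\in\mathbb R$.
   Context: Let $a=\{a_i\}$ be a sequence of positive reals with $\sum_i a_i^2<\infty$, $M_a=\{x\in\mathbb{R}^{\mathbb N}:\sum_i a_i^2x_i^2<\infty\}$ with inner product $\langle x,y\rangle_a=\sum_i a_i^2x_iy_i$ and norm $\|x\|_a=\sqrt{\langle x,x\rangle_a}$ (a Hilbert space). $e_i$ denotes the sequence with $1$ in position $i$ and $0$ elsewhere. For nonempty $E\subset M_a$, $\Lambda(E)$ is the set of $i\in\mathbb N$ for which there exist $x\in E$ and $\alpha\in\mathbb R\setminus\{0\}$ with $x+\alpha e_i\in E$. The generalized linear span of $E$ with respect to $p\in E$ is $\mathrm{GS}(E,p)=\{p+\sum_i\alpha_i(x_i-p)\in M_a: x_i\in E,\ \alpha_i\in\mathbb R\}$, where the index $i$ runs over a finite or countably infinite subset of $\mathbb N$ and infinite sums are limits in $\|\cdot\|_a$ of their partial sums. *)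

theory Defs
  imports "HOL-Analysis.Analysis"
begin

definition Ma :: "(nat \<Rightarrow> real) \<Rightarrow> (nat \<Rightarrow> real) set" where
  "Ma a = {x. summable (\<lambda>i. (a i)\<^sup>2 * (x i)\<^sup>2)}"

definition inner_a :: "(nat \<Rightarrow> real) \<Rightarrow> (nat \<Rightarrow> real) \<Rightarrow> (nat \<Rightarrow> real) \<Rightarrow> real" where
  "inner_a a x y = (\<Sum>i. (a i)\<^sup>2 * x i * y i)"

definition norm_a :: "(nat \<Rightarrow> real) \<Rightarrow> (nat \<Rightarrow> real) \<Rightarrow> real" where
  "norm_a a x = sqrt (inner_a a x x)"

definition unit_seq :: "nat \<Rightarrow> nat \<Rightarrow> real" ("\<ee>") where
  "unit_seq i = (\<lambda>j. if j = i then 1 else 0)"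

definition bounded_a :: "(nat \<Rightarrow> real) \<Rightarrow> (nat \<Rightarrow> real) set \<Rightarrow> bool" where
  "bounded_a a E \<longleftrightarrow> (\<exists>C. \<forall>x\<in>E. norm_a a x \<le> C)"

definition Lambda_set :: "(nat \<Rightarrow> real) set \<Rightarrow> nat set" where
  "Lambda_set E = {i. \<exists>x\<in>E. \<exists>\<alpha>::real. \<alpha> \<noteq> 0 \<and> (\<lambda>j. x j + \<alpha> * \<ee> i j) \<in> E}"

text \<open>A finite index set is w.l.o.g. {..<n}; a countably
  infinite index set is enumerated increasingly, i.e. indexed by nat, and the infinite
  sum is the limit in norm_a of the partial sums.\<close>
definition gen_span :: "(nat \<Rightarrow> real) \<Rightarrow> (nat \<Rightarrow> real) set \<Rightarrow> (nat \<Rightarrow> real) \<Rightarrow> (nat \<Rightarrow> real) set" where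
  "gen_span a E p = {y \<in> Ma a.
     (\<exists>(n::nat) xs \<alpha>s. (\<forall>k<n. xs k \<in> E) \<and> y = (\<lambda>j. p j + (\<Sum>k<n. \<alpha>s k * (xs k j - p j))))
   \<or> (\<exists>xs \<alpha>s. (\<forall>k::nat. xs k \<in> E) \<and>
        (\<lambda>n. norm_a a (\<lambda>j. p j + (\<Sum>k<n. \<alpha>s k * (xs k j - p j)) - y j)) \<longlonglongrightarrow> 0)}"

end

theory Submission
  imports Defs
begin

text \<open>If \<open>x\<close> and \<open>x + \<beta> e\<^sub>i\<close> both lie in \<open>E\<close> with \<open>\<beta> \<noteq> 0\<close>, then
  \<open>p + \<alpha> e\<^sub>i = p + (\<alpha>/\<beta>)((x + \<beta> e\<^sub>i) - p) - (\<alpha>/\<beta>)(x - p)\<close> is a two-term combination,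
  and it lies in \<open>M\<^sub>a\<close> because it differs from \<open>p\<close> in a single coordinate.\<close>

lemma Ma_add_scaled_unit_seq:
  assumes "x \<in> Ma a"
  shows "(\<lambda>j. x j + c * \<ee> i j) \<in> Ma a"
proof -
  have "\<forall>\<^sub>F j in sequentially. (a j)\<^sup>2 * (x j + c * \<ee> i j)\<^sup>2 = (a j)\<^sup>2 * (x j)\<^sup>2"
    unfolding eventually_sequentially by (rule exI[of _ "Suc i"]) (simp add: unit_seq_def)
  from summable_cong[OF this] assms show ?thesis
    unfolding Ma_def by simp
qed

lemma gen_span_finite_combination:
  fixes n :: nat
  assumes "y \<in> Ma a" and "\<forall>k<n. xs k \<in> E"
    and "y = (\<lambda>j. p j + (\<Sum>k<n. cs k * (xs k j - p j)))"
  shows "y \<in> gen_span a E p"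
  using assms unfolding gen_span_def by blast

lemma gen_span_add_scaled_diff:
  assumes "x \<in> E" and "y \<in> E" and "(\<lambda>j. p j + c * (y j - x j)) \<in> Ma a"
  shows "(\<lambda>j. p j + c * (y j - x j)) \<in> gen_span a E p"
proof (rule gen_span_finite_combination[where n = 2])
  define xs :: "nat \<Rightarrow> nat \<Rightarrow> real" where "xs = (\<lambda>k. if k = 0 then y else x)"
  define cs :: "nat \<Rightarrow> real" where "cs = (\<lambda>k. if k = 0 then c else - c)"
  show "\<forall>k<2. xs k \<in> E"
    using assms by (simp add: xs_def)
  show "(\<lambda>j. p j + c * (y j - x j)) = (\<lambda>j. p j + (\<Sum>k<2. cs k * (xs k j - p j)))"
    by (simp add: numeral_2_eq_2 xs_def cs_def algebra_simps)
qed (use assms in simp)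

theorem lemma3p3:
  fixes a :: "nat \<Rightarrow> real" and E :: "(nat \<Rightarrow> real) set" and p :: "nat \<Rightarrow> real" and i :: nat
  assumes a_pos: "\<And>j. a j > 0"
    and a_sq: "summable (\<lambda>j. (a j)\<^sup>2)"
    and E_sub: "E \<subseteq> Ma a"
    and E_ne: "E \<noteq> {}"
    and E_bdd: "bounded_a a E"
    and p_in: "p \<in> E"
    and i_in: "i \<in> Lambda_set E"
  shows "\<forall>\<alpha>::real. (\<lambda>j. p j + \<alpha> * \<ee> i j) \<in> gen_span a E p"
proof
  fix \<alpha> :: real
  obtain x \<beta> where x: "x \<in> E" and "\<beta> \<noteq> 0" and x_shift: "(\<lambda>j. x j + \<beta> * \<ee> i j) \<in> E"
    using i_in unfolding Lambda_set_def by blast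
  have shift_eq: "(\<lambda>j. p j + \<alpha> * \<ee> i j) = (\<lambda>j. p j + \<alpha> / \<beta> * ((x j + \<beta> * \<ee> i j) - x j))"
    using \<open>\<beta> \<noteq> 0\<close> by simp
  have "(\<lambda>j. p j + \<alpha> * \<ee> i j) \<in> Ma a"
    using Ma_add_scaled_unit_seq p_in E_sub by blast
  then show "(\<lambda>j. p j + \<alpha> * \<ee> i j) \<in> gen_span a E p"
    unfolding shift_eq by (rule gen_span_add_scaled_diff[OF x x_shift])
qed

end
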